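(* Let $(X,(\cdot,\cdot|\cdot))$ be a 2-inner product space over $\mathbb{K}\in\{\mathbb{R},\mathbb{C}\}$, let $n$ be a positive integer, let $x,y_1,\dots,y_n,z\in X$, and let $p>1$, $q$ with $\frac1p+\frac1q=1$. Then \[ \sum_{i=1}^{n}\left|(x,y_i|z)\right|^2\le \|x|z\|\Big(\sum_{i=1}^n\left|(x,y_i|z)\right|^{2p}\Big)^{\frac{1}{2p}}\left\{\Big(\sum_{i=1}^n\|y_i|z\|^{2q}\Big)^{\frac1q}+(n-1)^{\frac1p}\Big(\sum_{1\le i\ne j\le n}\left|(y_i,y_j|z)\right|^{q}\Big)^{\frac1q}\right\}^{1/2}. \]
   Context: A 2-inner product on a linear space $X$ of dimension greater than $1$ over $\mathbb{K}$ ($\mathbb{K}=\mathbb{R}$ or $\mathbb{C}$) is a function $(\cdot,\cdot|\cdot):X\times X\times X\to\mathbb{K}$ such that for all $x,x',y,z\in X$ and $\alpha\in\mathbb{K}$: (i) $(x,x|z)\ge 0$, and $(x,x|z)=0$ iff $x$ and $z$ are linearly dependent; (ii) $(x,x|z)=(z,z|x)$; (iii) $(y,x|z)=\overline{(x,y|z)}$; (iv) $(\alpha x,y|z)=\alpha(x,y|z)$; (v) $(x+x',y|z)=(x,y|z)+(x',y|z)$. The associated 2-norm is $\|x|z\|=\sqrt{(x,x|z)}$. The sum $\sum_{1\le i\ne j\le n}$ runs over all ordered pairs $(i,j)$ with $i\ne j$. *)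

theory Defs
  imports "HOL-Analysis.Analysis"
begin

definition lin_dep2_R :: "'a::real_vector \<Rightarrow> 'a \<Rightarrow> bool" where
  "lin_dep2_R x z \<longleftrightarrow> (\<exists>a b::real. (a \<noteq> 0 \<or> b \<noteq> 0) \<and> a *\<^sub>R x + b *\<^sub>R z = 0)"

definition lin_dep2_C :: "(complex \<Rightarrow> 'a::ab_group_add \<Rightarrow> 'a) \<Rightarrow> 'a \<Rightarrow> 'a \<Rightarrow> bool" where
  "lin_dep2_C sc x z \<longleftrightarrow> (\<exists>a b::complex. (a \<noteq> 0 \<or> b \<noteq> 0) \<and> sc a x + sc b z = 0)"

definition two_inner_R :: "('a::real_vector \<Rightarrow> 'a \<Rightarrow> 'a \<Rightarrow> real) \<Rightarrow> bool" where
  "two_inner_R ip \<longleftrightarrow>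
     (\<exists>u v::'a. \<not> lin_dep2_R u v) \<and>
     (\<forall>x z. ip x x z \<ge> 0 \<and> (ip x x z = 0 \<longleftrightarrow> lin_dep2_R x z)) \<and>
     (\<forall>x z. ip x x z = ip z z x) \<and>
     (\<forall>x y z. ip y x z = ip x y z) \<and>
     (\<forall>\<alpha> x y z. ip (\<alpha> *\<^sub>R x) y z = \<alpha> * ip x y z) \<and>
     (\<forall>x x' y z. ip (x + x') y z = ip x y z + ip x' y z)"

definition two_inner_C :: "(complex \<Rightarrow> 'a::ab_group_add \<Rightarrow> 'a) \<Rightarrow> ('a \<Rightarrow> 'a \<Rightarrow> 'a \<Rightarrow> complex) \<Rightarrow> bool" where
  "two_inner_C sc ip \<longleftrightarrow> vector_space sc \<and>
     (\<exists>u v::'a. \<not> lin_dep2_C sc u v) \<and>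
     (\<forall>x z. ip x x z \<in> \<real> \<and> Re (ip x x z) \<ge> 0 \<and> (ip x x z = 0 \<longleftrightarrow> lin_dep2_C sc x z)) \<and>
     (\<forall>x z. ip x x z = ip z z x) \<and>
     (\<forall>x y z. ip y x z = cnj (ip x y z)) \<and>
     (\<forall>\<alpha> x y z. ip (sc \<alpha> x) y z = \<alpha> * ip x y z) \<and>
     (\<forall>x x' y z. ip (x + x') y z = ip x y z + ip x' y z)"

definition two_norm_R :: "('a \<Rightarrow> 'a \<Rightarrow> 'a \<Rightarrow> real) \<Rightarrow> 'a \<Rightarrow> 'a \<Rightarrow> real" where
  "two_norm_R ip x z = sqrt (ip x x z)"

definition two_norm_C :: "('a \<Rightarrow> 'a \<Rightarrow> 'a \<Rightarrow> complex) \<Rightarrow> 'a \<Rightarrow> 'a \<Rightarrow> real" where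
  "two_norm_C ip x z = sqrt (Re (ip x x z))"

definition offdiag :: "nat \<Rightarrow> (nat \<times> nat) set" where
  "offdiag n = {(i, j). i \<in> {1..n} \<and> j \<in> {1..n} \<and> i \<noteq> j}"

end

theory Submission
  imports Defs
begin

text \<open>Put \<open>c\<^sub>i = (x, y\<^sub>i|z)\<close> and \<open>w = \<Sum> c\<^sub>i y\<^sub>i\<close>, so that \<open>(x, w|z) = \<Sum> |c\<^sub>i|\<^sup>2\<close>.
  For fixed \<open>z\<close> the 2-inner product is a semi-inner product, so Cauchy-Schwarz gives \<open>(\<Sum> |c\<^sub>i|\<^sup>2)\<^sup>2 \<le> \<parallel>x|z\<parallel>\<^sup>2 \<parallel>w|z\<parallel>\<^sup>2\<close>, and
  \<open>\<parallel>w|z\<parallel>\<^sup>2 \<le> \<Sum>\<^sub>i\<^sub>,\<^sub>j |c\<^sub>i| |c\<^sub>j| |(y\<^sub>i, y\<^sub>j|z)|\<close>. Splitting this double sum into its diagonal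
  and off-diagonal parts, Hoelder's inequality bounds each part; on the off-diagonal part
  it leaves \<open>\<Sum>\<^sub>i\<^sub>\<noteq>\<^sub>j |c\<^sub>i|\<^sup>p |c\<^sub>j|\<^sup>p\<close>, which is at most \<open>(n - 1) \<Sum> |c\<^sub>i|\<^sup>2\<^sup>p\<close> because
  \<open>(\<Sum> b\<^sub>i)\<^sup>2 \<le> n \<Sum> b\<^sub>i\<^sup>2\<close>.\<close>

lemma conjugate_exponent_gt_1:
  fixes p q :: real
  assumes "p > 1" and "1/p + 1/q = 1"
  shows "q > 1"
proof -
  have "1/q = 1 - 1/p"
    using assms(2) by simp
  with assms(1) have "0 < 1/q" "1/q < 1"
    by simp_all
  then show ?thesis
    by (simp add: divide_less_eq)
qed

lemma sqrt_powr_mult_2: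
  fixes d :: real
  assumes "d \<ge> 0"
  shows "sqrt d powr (2 * q) = d powr q"
  using assms by (simp add: powr_half_sqrt[symmetric] powr_powr)

lemma holder_inequality_sum:
  fixes f g :: "'i \<Rightarrow> real"
  assumes f: "\<And>i. i \<in> I \<Longrightarrow> f i \<ge> 0" and g: "\<And>i. i \<in> I \<Longrightarrow> g i \<ge> 0"
    and p: "p > 1" and q: "q > 1" and pq: "1/p + 1/q = 1"
  shows "(\<Sum>i\<in>I. f i * g i)
    \<le> (\<Sum>i\<in>I. f i powr p) powr (1/p) * (\<Sum>i\<in>I. g i powr q) powr (1/q)"
proof -
  define A where "A = (\<Sum>i\<in>I. f i powr p)"
  define B where "B = (\<Sum>i\<in>I. g i powr q)"
  show ?thesis
  proof (cases "finite I \<and> A > 0 \<and> B > 0")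
    case False
    have "A \<ge> 0" "B \<ge> 0"
      unfolding A_def B_def by (auto intro: sum_nonneg)
    with False have "infinite I \<or> (\<forall>i\<in>I. f i = 0) \<or> (\<forall>i\<in>I. g i = 0)"
      unfolding A_def B_def using f g by (auto simp: sum_nonneg_eq_0_iff)
    then have "(\<Sum>i\<in>I. f i * g i) = 0"
      by auto
    then show ?thesis
      by simp
  next
    case True
    define a where "a = A powr (1/p)"
    define b where "b = B powr (1/q)"
    have a: "a > 0" "a powr p = A" and b: "b > 0" "b powr q = B"
      using True p q by (auto simp: a_def b_def powr_powr)
    have "f i / a * (g i / b) \<le> f i powr p / (A * p) + g i powr q / (B * q)" if "i \<in> I" for i
      using Youngs_inequality[OF p q pq, of "f i / a" "g i / b"] f[OF that] g[OF that] a b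
      by (simp add: powr_divide)
    then have "(\<Sum>i\<in>I. f i / a * (g i / b))
        \<le> (\<Sum>i\<in>I. f i powr p / (A * p) + g i powr q / (B * q))"
      by (rule sum_mono)
    also have "\<dots> = 1"
      using True pq by (simp add: sum.distrib flip: sum_divide_distrib A_def B_def)
    finally have "(\<Sum>i\<in>I. f i * g i) \<le> a * b"
      using a b by (simp add: field_simps flip: sum_divide_distrib)
    then show ?thesis
      by (simp add: a_def b_def A_def B_def)
  qed
qed

lemma sum_sum_eq_diag_plus_offdiag:
  fixes f :: "nat \<Rightarrow> nat \<Rightarrow> 'c::comm_monoid_add"
  shows "(\<Sum>i=1..n. \<Sum>j=1..n. f i j) = (\<Sum>i=1..n. f i i) + (\<Sum>(i, j)\<in>offdiag n. f i j)"
proof -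
  have "(\<Sum>i=1..n. \<Sum>j=1..n. f i j) = (\<Sum>i=1..n. f i i + (\<Sum>j\<in>{1..n} - {i}. f i j))"
    by (intro sum.cong refl) (simp add: sum.remove)
  also have "\<dots> = (\<Sum>i=1..n. f i i) + (\<Sum>(i, j)\<in>Sigma {1..n} (\<lambda>i. {1..n} - {i}). f i j)"
    by (simp add: sum.distrib sum.Sigma)
  also have "Sigma {1..n} (\<lambda>i. {1..n} - {i}) = offdiag n"
    unfolding offdiag_def by auto
  finally show ?thesis .
qed

lemma sum_offdiag_mult_le:
  fixes b :: "nat \<Rightarrow> real"
  shows "(\<Sum>(i, j)\<in>offdiag n. b i * b j) \<le> (real n - 1) * (\<Sum>i=1..n. (b i)\<^sup>2)"
proof -
  have "(\<Sum>i=1..n. b i)\<^sup>2 = (\<Sum>i=1..n. (b i)\<^sup>2) + (\<Sum>(i, j)\<in>offdiag n. b i * b j)"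
    unfolding power2_eq_square sum_product by (rule sum_sum_eq_diag_plus_offdiag)
  moreover have "(\<Sum>i=1..n. 1 * b i)\<^sup>2 \<le> (\<Sum>i=1..n. 1\<^sup>2) * (\<Sum>i=1..n. (b i)\<^sup>2)"
    by (rule Cauchy_Schwarz_ineq_sum)
  ultimately show ?thesis
    by (simp add: algebra_simps)
qed

lemma sum_offdiag_holder:
  fixes a :: "nat \<Rightarrow> real" and e :: "nat \<Rightarrow> nat \<Rightarrow> real"
  assumes a: "\<And>i. a i \<ge> 0" and e: "\<And>i j. e i j \<ge> 0"
    and p: "p > 1" and q: "q > 1" and pq: "1/p + 1/q = 1"
  shows "(\<Sum>(i, j)\<in>offdiag n. a i * a j * e i j)
    \<le> (real n - 1) powr (1/p) * (\<Sum>i=1..n. a i powr (2*p)) powr (1/p)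
       * (\<Sum>(i, j)\<in>offdiag n. e i j powr q) powr (1/q)"
proof (cases "n = 0")
  case True
  then show ?thesis
    by (simp add: offdiag_def)
next
  case False
  define A where "A = (\<Sum>i=1..n. a i powr (2*p))"
  define E where "E = (\<Sum>(i, j)\<in>offdiag n. e i j powr q) powr (1/q)"
  have "(\<Sum>(i, j)\<in>offdiag n. (a i * a j) powr p) = (\<Sum>(i, j)\<in>offdiag n. a i powr p * a j powr p)"
    using a by (simp add: powr_mult)
  also have "\<dots> \<le> (real n - 1) * (\<Sum>i=1..n. (a i powr p)\<^sup>2)"
    by (rule sum_offdiag_mult_le)
  also have "(\<Sum>i=1..n. (a i powr p)\<^sup>2) = A"
    unfolding A_def by (simp add: power2_eq_square flip: powr_add)
  finally have offdiag_le: "(\<Sum>(i, j)\<in>offdiag n. (a i * a j) powr p) \<le> (real n - 1) * A" .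
  have "(\<Sum>(i, j)\<in>offdiag n. a i * a j * e i j)
      \<le> (\<Sum>(i, j)\<in>offdiag n. (a i * a j) powr p) powr (1/p) * E"
    using holder_inequality_sum[of "offdiag n" "\<lambda>(i, j). a i * a j" "\<lambda>(i, j). e i j"] a e p q pq
    by (simp add: split_def E_def)
  also have "\<dots> \<le> ((real n - 1) * A) powr (1/p) * E"
    using offdiag_le a p by (intro mult_right_mono powr_mono2) (auto simp: E_def intro: sum_nonneg)
  also have "\<dots> = (real n - 1) powr (1/p) * A powr (1/p) * E"
    using False by (simp add: A_def powr_mult sum_nonneg)
  finally show ?thesis
    unfolding A_def E_def .
qed

lemma double_sum_holder:
  fixes a :: "nat \<Rightarrow> real" and e :: "nat \<Rightarrow> nat \<Rightarrow> real"
  assumes a: "\<And>i. a i \<ge> 0" and e: "\<And>i j. e i j \<ge> 0"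
    and p: "p > 1" and q: "q > 1" and pq: "1/p + 1/q = 1"
  shows "(\<Sum>i=1..n. \<Sum>j=1..n. a i * a j * e i j)
    \<le> (\<Sum>i=1..n. a i powr (2*p)) powr (1/p)
       * ((\<Sum>i=1..n. e i i powr q) powr (1/q)
          + (real n - 1) powr (1/p) * (\<Sum>(i, j)\<in>offdiag n. e i j powr q) powr (1/q))"
proof -
  have "((a i)\<^sup>2) powr p = a i powr (2*p)" for i
  proof -
    have "(a i)\<^sup>2 = a i powr 2"
      using a by simp
    then show ?thesis
      by (simp add: powr_powr)
  qed
  then have "(\<Sum>i=1..n. (a i)\<^sup>2 * e i i)
      \<le> (\<Sum>i=1..n. a i powr (2*p)) powr (1/p) * (\<Sum>i=1..n. e i i powr q) powr (1/q)"
    using holder_inequality_sum[of "{1..n}" "\<lambda>i. (a i)\<^sup>2" "\<lambda>i. e i i" p q] e p q pq by simp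
  moreover have "(\<Sum>(i, j)\<in>offdiag n. a i * a j * e i j)
    \<le> (real n - 1) powr (1/p) * (\<Sum>i=1..n. a i powr (2*p)) powr (1/p)
       * (\<Sum>(i, j)\<in>offdiag n. e i j powr q) powr (1/q)"
    using a e p q pq by (rule sum_offdiag_holder)
  ultimately show ?thesis
    unfolding sum_sum_eq_diag_plus_offdiag by (simp add: power2_eq_square algebra_simps)
qed

lemma sum_square_le_of_gram_bound:
  fixes a :: "nat \<Rightarrow> real" and e :: "nat \<Rightarrow> nat \<Rightarrow> real"
  assumes a: "\<And>i. a i \<ge> 0" and e: "\<And>i j. e i j \<ge> 0"
    and p: "p > 1" and pq: "1/p + 1/q = 1" and N: "N \<ge> 0"
    and gram: "(\<Sum>i=1..n. (a i)\<^sup>2)\<^sup>2 \<le> N * (\<Sum>i=1..n. \<Sum>j=1..n. a i * a j * e i j)"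
  shows "(\<Sum>i=1..n. (a i)\<^sup>2)
    \<le> sqrt N * (\<Sum>i=1..n. a i powr (2*p)) powr (1/(2*p))
       * sqrt ((\<Sum>i=1..n. e i i powr q) powr (1/q)
               + (real n - 1) powr (1/p) * (\<Sum>(i, j)\<in>offdiag n. e i j powr q) powr (1/q))"
    (is "?S \<le> sqrt N * ?A powr _ * sqrt ?K")
proof -
  have q: "q > 1"
    using p pq by (rule conjugate_exponent_gt_1)
  have "(\<Sum>i=1..n. \<Sum>j=1..n. a i * a j * e i j) \<le> ?A powr (1/p) * ?K"
    using a e p q pq by (rule double_sum_holder)
  with gram N have S2: "?S\<^sup>2 \<le> N * (?A powr (1/p) * ?K)"
    by (meson mult_left_mono order_trans)
  have "?S = sqrt (?S\<^sup>2)"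
    by (simp add: sum_nonneg)
  also have "\<dots> \<le> sqrt (N * (?A powr (1/p) * ?K))"
    using S2 by (rule real_sqrt_le_mono)
  also have "\<dots> = sqrt N * sqrt (?A powr (1/p)) * sqrt ?K"
    by (simp add: real_sqrt_mult)
  also have "sqrt (?A powr (1/p)) = ?A powr (1/(2*p))"
    by (simp add: sum_nonneg powr_powr mult.commute flip: powr_half_sqrt)
  finally show ?thesis .
qed

lemma le_mult_of_quadratic_nonneg:
  fixes N T W :: real
  assumes nonneg: "\<And>r. 0 \<le> N - 2*r*T + r\<^sup>2*T*W" and W: "W \<ge> 0"
  shows "T \<le> N * W"
proof (cases "W = 0")
  case True
  show ?thesis
  proof (rule ccontr)
    assume "\<not> T \<le> N * W"
    with True have "T > 0"
      by simp
    then have "N - 2*((N + 1)/(2*T))*T = -1"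
      by (simp add: field_simps)
    with nonneg[of "(N + 1)/(2*T)"] True show False
      by simp
  qed
next
  case False
  with W have "W > 0"
    by simp
  have "0 \<le> N - 2*(1/W)*T + (1/W)\<^sup>2*T*W"
    by (rule nonneg)
  also have "\<dots> = N - T/W"
    using \<open>W > 0\<close> by (simp add: field_simps power2_eq_square)
  finally show ?thesis
    using \<open>W > 0\<close> by (simp add: field_simps)
qed

context
  fixes ip :: "'a::real_vector \<Rightarrow> 'a \<Rightarrow> 'a \<Rightarrow> real"
  assumes ip: "two_inner_R ip"
begin

lemma two_inner_R_commute: "ip y x z = ip x y z"
  using ip unfolding two_inner_R_def by blast

lemma two_inner_R_nonneg: "ip x x z \<ge> 0"
  using ip unfolding two_inner_R_def by blast

lemma two_inner_R_linear_left: "linear (\<lambda>x. ip x y z)"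
  using ip unfolding two_inner_R_def by (intro linearI) auto

lemma two_inner_R_linear_right: "linear (\<lambda>y. ip x y z)"
  unfolding two_inner_R_commute[of x] by (rule two_inner_R_linear_left)

lemma two_inner_R_Cauchy_Schwarz: "(ip x w z)\<^sup>2 \<le> ip x x z * ip w w z"
proof (rule le_mult_of_quadratic_nonneg)
  fix r
  let ?v = "x - (r * ip x w z) *\<^sub>R w"
  have "ip ?v ?v z = ip x x z - 2 * r * (ip x w z)\<^sup>2 + r\<^sup>2 * (ip x w z)\<^sup>2 * ip w w z"
    unfolding linear_diff[OF two_inner_R_linear_left] linear_diff[OF two_inner_R_linear_right]
      linear_scale[OF two_inner_R_linear_left] linear_scale[OF two_inner_R_linear_right]
    by (simp add: two_inner_R_commute[of w x] algebra_simps power2_eq_square)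
  then show "0 \<le> ip x x z - 2 * r * (ip x w z)\<^sup>2 + r\<^sup>2 * (ip x w z)\<^sup>2 * ip w w z"
    using two_inner_R_nonneg[of ?v z] by simp
qed (rule two_inner_R_nonneg)

lemma two_inner_R_sum_square_le_gram:
  "(\<Sum>i=1..n. \<bar>ip x (y i) z\<bar>\<^sup>2)\<^sup>2
    \<le> ip x x z * (\<Sum>i=1..n. \<Sum>j=1..n. \<bar>ip x (y i) z\<bar> * \<bar>ip x (y j) z\<bar> * \<bar>ip (y i) (y j) z\<bar>)"
    (is "?S\<^sup>2 \<le> _ * ?G")
proof -
  define w where "w = (\<Sum>i=1..n. ip x (y i) z *\<^sub>R y i)"
  have xw: "ip x w z = ?S"
    unfolding w_def
    by (simp add: linear_sum[OF two_inner_R_linear_right] linear_scale[OF two_inner_R_linear_right]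
        power2_eq_square)
  have "ip w w z = (\<Sum>i=1..n. \<Sum>j=1..n. ip x (y i) z * ip x (y j) z * ip (y i) (y j) z)"
    unfolding w_def
    by (simp add: linear_sum[OF two_inner_R_linear_left] linear_scale[OF two_inner_R_linear_left]
        linear_sum[OF two_inner_R_linear_right] linear_scale[OF two_inner_R_linear_right]
        sum_distrib_left mult_ac two_inner_R_commute[of "y _" "y _"])
  also have "\<dots> \<le> ?G"
    by (intro sum_mono) (simp flip: abs_mult)
  finally have ww: "ip w w z \<le> ?G" .
  have "?S\<^sup>2 = (ip x w z)\<^sup>2"
    by (simp only: xw)
  also have "\<dots> \<le> ip x x z * ip w w z"
    by (rule two_inner_R_Cauchy_Schwarz)
  also have "\<dots> \<le> ip x x z * ?G"
    using ww two_inner_R_nonneg by (rule mult_left_mono)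
  finally show ?thesis .
qed

lemma two_inner_R_inequality:
  assumes "p > 1" and "1/p + 1/q = 1"
  shows "(\<Sum>i=1..n. \<bar>ip x (y i) z\<bar> ^ 2)
    \<le> two_norm_R ip x z
       * (\<Sum>i=1..n. \<bar>ip x (y i) z\<bar> powr (2 * p)) powr (1 / (2 * p))
       * sqrt ((\<Sum>i=1..n. two_norm_R ip (y i) z powr (2 * q)) powr (1 / q)
               + (real n - 1) powr (1 / p)
                 * (\<Sum>(i, j)\<in>offdiag n. \<bar>ip (y i) (y j) z\<bar> powr q) powr (1 / q))"
proof -
  have "(\<Sum>i=1..n. \<bar>ip x (y i) z\<bar> ^ 2)
    \<le> sqrt (ip x x z)
       * (\<Sum>i=1..n. \<bar>ip x (y i) z\<bar> powr (2 * p)) powr (1 / (2 * p))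
       * sqrt ((\<Sum>i=1..n. \<bar>ip (y i) (y i) z\<bar> powr q) powr (1 / q)
               + (real n - 1) powr (1 / p)
                 * (\<Sum>(i, j)\<in>offdiag n. \<bar>ip (y i) (y j) z\<bar> powr q) powr (1 / q))"
    using assms two_inner_R_nonneg
    by (intro sum_square_le_of_gram_bound two_inner_R_sum_square_le_gram) auto
  also have "(\<Sum>i=1..n. \<bar>ip (y i) (y i) z\<bar> powr q) = (\<Sum>i=1..n. two_norm_R ip (y i) z powr (2 * q))"
    by (simp add: two_norm_R_def sqrt_powr_mult_2 two_inner_R_nonneg)
  finally show ?thesis
    by (simp only: two_norm_R_def)
qed

end

context
  fixes sc :: "complex \<Rightarrow> 'b::ab_group_add \<Rightarrow> 'b" and ip :: "'b \<Rightarrow> 'b \<Rightarrow> 'b \<Rightarrow> complex"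
  assumes ip: "two_inner_C sc ip"
begin

lemma two_inner_C_add_left: "ip (u + v) y z = ip u y z + ip v y z"
  using ip unfolding two_inner_C_def by blast

lemma two_inner_C_scale_left: "ip (sc \<alpha> v) y z = \<alpha> * ip v y z"
  using ip unfolding two_inner_C_def by blast

lemma two_inner_C_cnj_commute: "ip y x z = cnj (ip x y z)"
  using ip unfolding two_inner_C_def by blast

lemma two_inner_C_self_real: "ip x x z = complex_of_real (Re (ip x x z))"
  using ip unfolding two_inner_C_def by (metis Reals_cases Re_complex_of_real)

lemma two_inner_C_Re_nonneg: "Re (ip x x z) \<ge> 0"
  using ip unfolding two_inner_C_def by blast

lemma two_inner_C_add_right: "ip x (u + v) z = ip x u z + ip x v z"
  by (metis two_inner_C_cnj_commute two_inner_C_add_left complex_cnj_add)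

lemma two_inner_C_scale_right: "ip x (sc \<alpha> v) z = cnj \<alpha> * ip x v z"
  by (metis two_inner_C_cnj_commute two_inner_C_scale_left complex_cnj_mult)

lemma two_inner_C_sum_left: "ip (\<Sum>i\<in>I. sc (c i) (v i)) y z = (\<Sum>i\<in>I. c i * ip (v i) y z)"
proof (induction I rule: infinite_finite_induct)
  case (insert i I)
  then show ?case
    by (simp add: two_inner_C_add_left two_inner_C_scale_left)
qed (use two_inner_C_add_left[of 0 0] in simp_all)

lemma two_inner_C_sum_right:
  "ip y (\<Sum>i\<in>I. sc (c i) (v i)) z = (\<Sum>i\<in>I. cnj (c i) * ip y (v i) z)"
  by (subst two_inner_C_cnj_commute) (simp add: two_inner_C_sum_left two_inner_C_cnj_commute[of y])

lemma two_inner_C_Cauchy_Schwarz: "(cmod (ip x w z))\<^sup>2 \<le> Re (ip x x z) * Re (ip w w z)"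
proof (rule le_mult_of_quadratic_nonneg)
  fix r
  let ?t = "ip x w z"
  let ?v = "x + sc (- (complex_of_real r * ?t)) w"
  have "ip ?v ?v z = ip x x z - 2 * r * (?t * cnj ?t) + r\<^sup>2 * (?t * cnj ?t) * ip w w z"
    by (simp add: two_inner_C_add_left two_inner_C_add_right two_inner_C_scale_left
        two_inner_C_scale_right two_inner_C_cnj_commute[of w x] algebra_simps power2_eq_square)
  also have "\<dots> = complex_of_real
      (Re (ip x x z) - 2 * r * (cmod ?t)\<^sup>2 + r\<^sup>2 * (cmod ?t)\<^sup>2 * Re (ip w w z))"
    by (subst (1 2) two_inner_C_self_real) (simp flip: complex_norm_square)
  finally show "0 \<le> Re (ip x x z) - 2 * r * (cmod ?t)\<^sup>2 + r\<^sup>2 * (cmod ?t)\<^sup>2 * Re (ip w w z)"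
    using two_inner_C_Re_nonneg[of ?v z] by simp
qed (rule two_inner_C_Re_nonneg)

lemma two_inner_C_sum_square_le_gram:
  "(\<Sum>i=1..n. (cmod (ip x (y i) z))\<^sup>2)\<^sup>2
    \<le> Re (ip x x z)
       * (\<Sum>i=1..n. \<Sum>j=1..n. cmod (ip x (y i) z) * cmod (ip x (y j) z) * cmod (ip (y i) (y j) z))"
    (is "?S\<^sup>2 \<le> _ * ?G")
proof -
  define w where "w = (\<Sum>i=1..n. sc (ip x (y i) z) (y i))"
  have "ip x w z = complex_of_real (\<Sum>i=1..n. (cmod (ip x (y i) z))\<^sup>2)"
    unfolding w_def two_inner_C_sum_right by (simp add: mult.commute flip: complex_norm_square)
  then have xw: "cmod (ip x w z) = ?S"
    by (simp only: norm_of_real abs_of_nonneg sum_nonneg zero_le_power2)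
  have "ip w w z
      = (\<Sum>i=1..n. \<Sum>j=1..n. ip x (y i) z * cnj (ip x (y j) z) * ip (y i) (y j) z)"
    unfolding w_def two_inner_C_sum_left two_inner_C_sum_right
    by (subst sum.swap) (simp add: sum_distrib_left mult_ac)
  then have "Re (ip w w z)
      = (\<Sum>i=1..n. \<Sum>j=1..n. Re (ip x (y i) z * cnj (ip x (y j) z) * ip (y i) (y j) z))"
    by (simp add: Re_sum)
  also have "\<dots> \<le> ?G"
    by (intro sum_mono) (metis complex_Re_le_cmod norm_mult complex_mod_cnj)
  finally have ww: "Re (ip w w z) \<le> ?G" .
  have "?S\<^sup>2 = (cmod (ip x w z))\<^sup>2"
    by (simp only: xw)
  also have "\<dots> \<le> Re (ip x x z) * Re (ip w w z)"
    by (rule two_inner_C_Cauchy_Schwarz)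
  also have "\<dots> \<le> Re (ip x x z) * ?G"
    using ww two_inner_C_Re_nonneg by (rule mult_left_mono)
  finally show ?thesis .
qed

lemma two_inner_C_inequality:
  assumes "p > 1" and "1/p + 1/q = 1"
  shows "(\<Sum>i=1..n. cmod (ip x (y i) z) ^ 2)
    \<le> two_norm_C ip x z
       * (\<Sum>i=1..n. cmod (ip x (y i) z) powr (2 * p)) powr (1 / (2 * p))
       * sqrt ((\<Sum>i=1..n. two_norm_C ip (y i) z powr (2 * q)) powr (1 / q)
               + (real n - 1) powr (1 / p)
                 * (\<Sum>(i, j)\<in>offdiag n. cmod (ip (y i) (y j) z) powr q) powr (1 / q))"
proof -
  have "(\<Sum>i=1..n. cmod (ip x (y i) z) ^ 2)
    \<le> sqrt (Re (ip x x z))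
       * (\<Sum>i=1..n. cmod (ip x (y i) z) powr (2 * p)) powr (1 / (2 * p))
       * sqrt ((\<Sum>i=1..n. cmod (ip (y i) (y i) z) powr q) powr (1 / q)
               + (real n - 1) powr (1 / p)
                 * (\<Sum>(i, j)\<in>offdiag n. cmod (ip (y i) (y j) z) powr q) powr (1 / q))"
    using assms two_inner_C_Re_nonneg
    by (intro sum_square_le_of_gram_bound two_inner_C_sum_square_le_gram) auto
  also have "(\<Sum>i=1..n. cmod (ip (y i) (y i) z) powr q) = (\<Sum>i=1..n. two_norm_C ip (y i) z powr (2 * q))"
    by (subst two_inner_C_self_real) (simp add: two_norm_C_def sqrt_powr_mult_2 two_inner_C_Re_nonneg)
  finally show ?thesis
    by (simp only: two_norm_C_def)
qed

end

theorem mainTheorem2: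
  fixes dummyR :: "'a::real_vector" and dummyC :: "'b::ab_group_add"
  shows
  "(\<forall>(ip :: 'a \<Rightarrow> 'a \<Rightarrow> 'a \<Rightarrow> real) (n::nat) (x::'a) (y::nat \<Rightarrow> 'a) (z::'a) (p::real) (q::real).
      two_inner_R ip \<and> n \<ge> 1 \<and> p > 1 \<and> 1 / p + 1 / q = 1 \<longrightarrow>
      (\<Sum>i=1..n. \<bar>ip x (y i) z\<bar> ^ 2)
        \<le> two_norm_R ip x z
           * (\<Sum>i=1..n. \<bar>ip x (y i) z\<bar> powr (2 * p)) powr (1 / (2 * p))
           * sqrt ((\<Sum>i=1..n. two_norm_R ip (y i) z powr (2 * q)) powr (1 / q)
                   + (real n - 1) powr (1 / p)
                     * (\<Sum>(i, j)\<in>offdiag n. \<bar>ip (y i) (y j) z\<bar> powr q) powr (1 / q)))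
   \<and>
   (\<forall>(sc :: complex \<Rightarrow> 'b \<Rightarrow> 'b) (ip :: 'b \<Rightarrow> 'b \<Rightarrow> 'b \<Rightarrow> complex) (n::nat) (x::'b) (y::nat \<Rightarrow> 'b) (z::'b) (p::real) (q::real).
      two_inner_C sc ip \<and> n \<ge> 1 \<and> p > 1 \<and> 1 / p + 1 / q = 1 \<longrightarrow>
      (\<Sum>i=1..n. cmod (ip x (y i) z) ^ 2)
        \<le> two_norm_C ip x z
           * (\<Sum>i=1..n. cmod (ip x (y i) z) powr (2 * p)) powr (1 / (2 * p))
           * sqrt ((\<Sum>i=1..n. two_norm_C ip (y i) z powr (2 * q)) powr (1 / q)
                   + (real n - 1) powr (1 / p)
                     * (\<Sum>(i, j)\<in>offdiag n. cmod (ip (y i) (y j) z) powr q) powr (1 / q)))"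
  using two_inner_R_inequality two_inner_C_inequality by blast


end
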